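(* Let $G=(N,T,F,P,S)$ be a grounded indexed grammar, $D$ a derivation tree of $G$ (with some set of marked positions of its yield), and $H=(v_0,\dots,v_m)$ a limited flat descent in $D$. Then $H$ has at most $|N|\cdot 3^{|N|}$ splits.
   Context: An indexed grammar $G=(N,T,F,P,S)$ has finite alphabets $N$ (nonterminals), $T$ (terminals), $F$ (stack symbols), start symbol $S$, and productions of the forms $A\to r$, $A\to Bf$, $Af\to r$ ($A,B\in N$, $f\in F$, $r\in(N\cup T)^*$); nonterminals carry stacks $x\in F^*$ (written $Ax$, top first); applying $A\to r$ to $Ax$ gives $r$ with each nonterminal $C$ replaced by $Cx$; $A\to Bf$ turns $Ax$ into $Bfx$; $Af\to r$ turns $Afy$ into $r$ with each nonterminal $C$ replaced by $Cy$. $G$ is grounded if there is $\$\in F$ such that all productions have the forms $S\to A\$$, $A\to r$, $A\to Bf$, $Af\to r$, $A\$\to s$ with $A,B\in N\setminus\{S\}$, $f\in F\setminus\{\$\}$, $r\in(N\setminus\{S\})^+$, $s\in T^*$. A derivation tree is an ordered tree with root labelled $S$ (empty stack), internal nodes labelled in $NF^*$, leaves labelled in $T^*$, where the children of each internal node are obtained from its label by one production (a production $A\$\to s'$ yields a single leaf labelled $s'$); its yield is the concatenation of leaf labels. Marking: a leaf is marked if its label contains a marked position of the yield; an internal node is marked if it has a marked descendant; a branch node is a node with more than one marked child. For an internal node $v$ labelled $Ax$: $\sigma(v)=A$, $\eta(v)=|x|$; $v'$ is in the scope of $v$ iff $v'$ is internal and there is a downward path from $v$ to $v'$ all of whose nodes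 $v''$ (including $v'$) satisfy $\eta(v'')\ge \eta(v)$; $\beta(v)$ is the set of nodes in the scope of $v$ none of whose children is in the scope of $v$; $\tau(v)=(\tau_1,\tau_2,\tau_3)$ with $\tau_1=\{A:\sigma(v')\ne A\ \forall v'\in\beta(v)\}$, $\tau_2=\{A:\exists v'\in\beta(v),\sigma(v')=A$, and no marked $v'\in\beta(v)$ has $\sigma(v')=A\}$, $\tau_3=\{A:\exists$ marked $v'\in\beta(v)$ with $\sigma(v')=A\}$. A descent is a list of internal nodes $(v_0,\dots,v_m)$, $m\ge0$, with $v_m\in\beta(v_0)$ and each $v_i$ ($i\ge1$) a (not necessarily immediate) descendant of $v_{i-1}$. For $0\le i<m$ there is a split between $i$ and $i+1$ iff some node on the tree path from $v_i$ (inclusive) to $v_{i+1}$ (exclusive) is a branch node (counted as one split regardless of how many branch nodes); the number of splits of $H$ is the number of such $i$. $H$ is flat if $\eta(v_i)=\eta(v_0)$ for all $i$. $H$ is limited iff for all $0\le b_1<t_1<t_2\le b_2\le m$ with $\sigma(v_{b_1})=\sigma(v_{t_1})$, $\sigma(v_{t_2})=\sigma(v_{b_2})$, $v_{b_2}\in\beta(v_{b_1})$, $v_{t_2}\in\beta(v_{t_1})$ and $\tau(v_{b_1})=\tau(v_{t_1})$, there is no split between $i$ and $i+1$ for any $b_1\le i<t_1$ or any $t_2\le i<b_2$. *)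

theory Defs
  imports Main
begin

datatype ('n,'t) sym = NT 'n | Tm 't

text \<open>Productions: A -> r, A -> B f, A f -> r.\<close>
datatype ('n,'t,'f) prod =
    Plain 'n "('n,'t) sym list"
  | Push 'n 'n 'f
  | Pop 'n 'f "('n,'t) sym list"

record ('n,'t,'f) igrammar =
  nts   :: "'n set"
  terms :: "'t set"
  stk   :: "'f set"
  prods :: "('n,'t,'f) prod set"
  start :: 'n

definition indexed_grammar :: "('n,'t,'f) igrammar \<Rightarrow> bool" where
  "indexed_grammar G \<longleftrightarrow> finite (nts G) \<and> finite (terms G) \<and> finite (stk G)
     \<and> finite (prods G) \<and> start G \<in> nts G
     \<and> (\<forall>p\<in>prods G.
          (\<forall>A r. p = Plain A r \<longrightarrow> A \<in> nts G \<and> (\<forall>s\<in>set r. case s of NT B \<Rightarrow> B \<in> nts G | Tm a \<Rightarrow> a \<in> terms G))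
        \<and> (\<forall>A B f. p = Push A B f \<longrightarrow> A \<in> nts G \<and> B \<in> nts G \<and> f \<in> stk G)
        \<and> (\<forall>A f r. p = Pop A f r \<longrightarrow> A \<in> nts G \<and> f \<in> stk G \<and> (\<forall>s\<in>set r. case s of NT B \<Rightarrow> B \<in> nts G | Tm a \<Rightarrow> a \<in> terms G)))"

text \<open>Grounded with respect to the bottom symbol dol.\<close>
definition grounded_wrt :: "('n,'t,'f) igrammar \<Rightarrow> 'f \<Rightarrow> bool" where
  "grounded_wrt G dol \<longleftrightarrow> dol \<in> stk G \<and>
     (\<forall>p\<in>prods G.
        (\<exists>A. p = Push (start G) A dol \<and> A \<in> nts G - {start G})
      \<or> (\<exists>A r. p = Plain A r \<and> A \<in> nts G - {start G} \<and> r \<noteq> [] \<and> set r \<subseteq> NT ` (nts G - {start G}))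
      \<or> (\<exists>A B f. p = Push A B f \<and> A \<in> nts G - {start G} \<and> B \<in> nts G - {start G} \<and> f \<in> stk G - {dol})
      \<or> (\<exists>A f r. p = Pop A f r \<and> A \<in> nts G - {start G} \<and> f \<in> stk G - {dol} \<and> r \<noteq> [] \<and> set r \<subseteq> NT ` (nts G - {start G}))
      \<or> (\<exists>A s. p = Pop A dol (map Tm s) \<and> A \<in> nts G - {start G} \<and> set s \<subseteq> terms G))"

definition grounded :: "('n,'t,'f) igrammar \<Rightarrow> bool" where
  "grounded G \<longleftrightarrow> (\<exists>dol. grounded_wrt G dol)"

text \<open>Internal nodes carry a nonterminal and a stack (top first); leaves carry a terminal string.\<close>
datatype ('n,'f,'t) dtree = Leaf "'t list" | Node 'n "'f list" "('n,'f,'t) dtree list"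

fun lab :: "('n,'f,'t) dtree \<Rightarrow> ('n \<times> 'f list) option" where
  "lab (Leaf s) = None"
| "lab (Node A x ts) = Some (A, x)"

definition rhs_ok :: "('n,'t) sym list \<Rightarrow> 'f list \<Rightarrow> ('n,'f,'t) dtree list \<Rightarrow> bool" where
  "rhs_ok r y ts \<longleftrightarrow> (\<exists>s. r = map Tm s \<and> ts = [Leaf s])
     \<or> (\<exists>Bs. Bs \<noteq> [] \<and> r = map NT Bs \<and> map lab ts = map (\<lambda>B. Some (B, y)) Bs)"

definition step_ok :: "('n,'t,'f) igrammar \<Rightarrow> 'n \<Rightarrow> 'f list \<Rightarrow> ('n,'f,'t) dtree list \<Rightarrow> bool" where
  "step_ok G A x ts \<longleftrightarrow>
      (\<exists>r. Plain A r \<in> prods G \<and> rhs_ok r x ts)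
    \<or> (\<exists>B f u. Push A B f \<in> prods G \<and> ts = [u] \<and> lab u = Some (B, f # x))
    \<or> (\<exists>f y r. x = f # y \<and> Pop A f r \<in> prods G \<and> rhs_ok r y ts)"

fun subt :: "('n,'f,'t) dtree \<Rightarrow> nat list \<Rightarrow> ('n,'f,'t) dtree option" where
  "subt t [] = Some t"
| "subt (Leaf s) (i # p) = None"
| "subt (Node A x ts) (i # p) = (if i < length ts then subt (ts ! i) p else None)"

definition derivation_tree :: "('n,'t,'f) igrammar \<Rightarrow> ('n,'f,'t) dtree \<Rightarrow> bool" where
  "derivation_tree G D \<longleftrightarrow> lab D = Some (start G, [])
     \<and> (\<forall>p A x ts. subt D p = Some (Node A x ts) \<longrightarrow> step_ok G A x ts)"

fun yield :: "('n,'f,'t) dtree \<Rightarrow> 't list" where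
  "yield (Leaf s) = s"
| "yield (Node A x ts) = concat (map yield ts)"

fun off :: "('n,'f,'t) dtree \<Rightarrow> nat list \<Rightarrow> nat" where
  "off t [] = 0"
| "off (Leaf s) (i # p) = 0"
| "off (Node A x ts) (i # p) =
     (if i < length ts then sum_list (map (length \<circ> yield) (take i ts)) + off (ts ! i) p else 0)"

definition is_internal :: "('n,'f,'t) dtree \<Rightarrow> nat list \<Rightarrow> bool" where
  "is_internal D p \<longleftrightarrow> (\<exists>A x ts. subt D p = Some (Node A x ts))"

definition nchildren :: "('n,'f,'t) dtree \<Rightarrow> nat list \<Rightarrow> nat" where
  "nchildren D p = (case subt D p of Some (Node A x ts) \<Rightarrow> length ts | _ \<Rightarrow> 0)"

definition sigma :: "('n,'f,'t) dtree \<Rightarrow> nat list \<Rightarrow> 'n" where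
  "sigma D p = fst (the (lab (the (subt D p))))"

definition eta :: "('n,'f,'t) dtree \<Rightarrow> nat list \<Rightarrow> nat" where
  "eta D p = length (snd (the (lab (the (subt D p)))))"

section \<open>Marking (M = set of marked positions of the yield, 0-based)\<close>

definition marked_leaf :: "('n,'f,'t) dtree \<Rightarrow> nat set \<Rightarrow> nat list \<Rightarrow> bool" where
  "marked_leaf D M p \<longleftrightarrow> (\<exists>s. subt D p = Some (Leaf s)
      \<and> (\<exists>k\<in>M. off D p \<le> k \<and> k < off D p + length s))"

inductive marked :: "('n,'f,'t) dtree \<Rightarrow> nat set \<Rightarrow> nat list \<Rightarrow> bool" for D M where
  leaf: "marked_leaf D M p \<Longrightarrow> marked D M p"
| inner: "is_internal D p \<Longrightarrow> q \<noteq> [] \<Longrightarrow> marked D M (p @ q) \<Longrightarrow> marked D M p"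

definition branch_node :: "('n,'f,'t) dtree \<Rightarrow> nat set \<Rightarrow> nat list \<Rightarrow> bool" where
  "branch_node D M p \<longleftrightarrow> is_internal D p
     \<and> card {i. i < nchildren D p \<and> marked D M (p @ [i])} > 1"

definition in_scope :: "('n,'f,'t) dtree \<Rightarrow> nat list \<Rightarrow> nat list \<Rightarrow> bool" where
  "in_scope D v v' \<longleftrightarrow> (\<exists>q. v' = v @ q \<and>
      (\<forall>k\<le>length q. is_internal D (v @ take k q) \<and> eta D (v @ take k q) \<ge> eta D v))"

definition beta :: "('n,'f,'t) dtree \<Rightarrow> nat list \<Rightarrow> nat list set" where
  "beta D v = {v'. in_scope D v v' \<and> (\<forall>i<nchildren D v'. \<not> in_scope D v (v' @ [i]))}"

definition tau :: "('n,'t,'f) igrammar \<Rightarrow> ('n,'f,'t) dtree \<Rightarrow> nat set \<Rightarrow> nat list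
                     \<Rightarrow> 'n set \<times> 'n set \<times> 'n set" where
  "tau G D M v =
     ({A\<in>nts G. \<forall>v'\<in>beta D v. sigma D v' \<noteq> A},
      {A\<in>nts G. (\<exists>v'\<in>beta D v. sigma D v' = A) \<and> \<not> (\<exists>v'\<in>beta D v. marked D M v' \<and> sigma D v' = A)},
      {A\<in>nts G. \<exists>v'\<in>beta D v. marked D M v' \<and> sigma D v' = A})"

text \<open>A descent (v_0,...,v_m) is a nonempty list vs with m = length vs - 1.\<close>
definition descent :: "('n,'f,'t) dtree \<Rightarrow> nat list list \<Rightarrow> bool" where
  "descent D vs \<longleftrightarrow> vs \<noteq> [] \<and> (\<forall>v\<in>set vs. is_internal D v)
     \<and> last vs \<in> beta D (hd vs)
     \<and> (\<forall>i. 0 < i \<and> i < length vs \<longrightarrow> (\<exists>q. q \<noteq> [] \<and> vs ! i = vs ! (i - 1) @ q))"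

definition split_at :: "('n,'f,'t) dtree \<Rightarrow> nat set \<Rightarrow> nat list list \<Rightarrow> nat \<Rightarrow> bool" where
  "split_at D M vs i \<longleftrightarrow> (\<exists>q. vs ! (i + 1) = vs ! i @ q \<and>
      (\<exists>k<length q. branch_node D M (vs ! i @ take k q)))"

definition num_splits :: "('n,'f,'t) dtree \<Rightarrow> nat set \<Rightarrow> nat list list \<Rightarrow> nat" where
  "num_splits D M vs = card {i. i + 1 < length vs \<and> split_at D M vs i}"

definition flat :: "('n,'f,'t) dtree \<Rightarrow> nat list list \<Rightarrow> bool" where
  "flat D vs \<longleftrightarrow> (\<forall>i<length vs. eta D (vs ! i) = eta D (vs ! 0))"

definition limited :: "('n,'t,'f) igrammar \<Rightarrow> ('n,'f,'t) dtree \<Rightarrow> nat set \<Rightarrow> nat list list \<Rightarrow> bool" where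
  "limited G D M vs \<longleftrightarrow>
    (\<forall>b1 t1 t2 b2. b1 < t1 \<and> t1 < t2 \<and> t2 \<le> b2 \<and> b2 < length vs
       \<and> sigma D (vs ! b1) = sigma D (vs ! t1) \<and> sigma D (vs ! t2) = sigma D (vs ! b2)
       \<and> vs ! b2 \<in> beta D (vs ! b1) \<and> vs ! t2 \<in> beta D (vs ! t1)
       \<and> tau G D M (vs ! b1) = tau G D M (vs ! t1)
       \<longrightarrow> (\<forall>i. (b1 \<le> i \<and> i < t1) \<or> (t2 \<le> i \<and> i < b2) \<longrightarrow> \<not> split_at D M vs i))"

end

theory Submission
  imports Defs "HOL-Library.FuncSet"
begin

text \<open>In a flat descent the final node \<open>v\<^sub>m\<close> lies in \<open>\<beta>(v\<^sub>i)\<close> for every \<open>i\<close>, so the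
  quadruple condition of limitedness can be applied with \<open>t\<^sub>2 = b\<^sub>2 = m\<close>. It then says that two
  splitting indices \<open>i < j\<close> cannot carry the same pair \<open>(\<sigma>, \<tau>)\<close>, since the split at \<open>i\<close> lies in
  the forbidden range \<open>[i, j)\<close>. Hence splits inject into pairs of a nonterminal and a partition
  of \<open>N\<close> into three labelled blocks, of which there are at most \<open>|N| \<cdot> 3^|N|\<close>.\<close>

lemma subt_append:
  "subt t (p @ q) = (case subt t p of Some t' \<Rightarrow> subt t' q | None \<Rightarrow> None)"
proof (induction p arbitrary: t)
  case Nil
  then show ?case by simp
next
  case (Cons i p)
  then show ?case by (cases t) auto
qed

lemma rhs_ok_NT_in_set:
  assumes "rhs_ok r y ts" "i < length ts" "ts ! i = Node A x ts'"
  shows "NT A \<in> set r"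
  using assms(1) unfolding rhs_ok_def
proof (elim disjE exE conjE)
  fix s
  assume "ts = [Leaf s]"
  then show ?thesis using assms by auto
next
  fix Bs
  assume r: "r = map NT Bs" and labs: "map lab ts = map (\<lambda>B. Some (B, y)) Bs"
  then have len: "length ts = length Bs" by (metis length_map)
  have "lab (ts ! i) = Some (Bs ! i, y)" using labs assms(2) len by (metis nth_map)
  then show ?thesis using assms(2,3) r len by auto
qed

lemma derivation_tree_node_in_nts:
  assumes G: "indexed_grammar G" and D: "derivation_tree G D"
  shows "subt D p = Some (Node A x ts) \<Longrightarrow> A \<in> nts G"
proof (induction p arbitrary: A x ts rule: rev_induct)
  case Nil
  then show ?case using D G by (cases D) (auto simp: derivation_tree_def indexed_grammar_def)
next
  case (snoc i p)
  then obtain t' where t': "subt D p = Some t'" "subt t' [i] = Some (Node A x ts)"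
    by (cases "subt D p") (auto simp: subt_append)
  then obtain B y us where B: "t' = Node B y us" and i: "i < length us"
    and child: "us ! i = Node A x ts"
    by (cases t') (auto split: if_splits)
  have "step_ok G B y us" using D t' B by (auto simp: derivation_tree_def)
  then show ?case unfolding step_ok_def
  proof (elim disjE exE conjE)
    fix r
    assume "Plain B r \<in> prods G" "rhs_ok r y us"
    then show ?thesis using rhs_ok_NT_in_set[OF _ i child] G
      unfolding indexed_grammar_def by (metis sym.simps(5))
  next
    fix C f u
    assume "Push B C f \<in> prods G" "us = [u]" "lab u = Some (C, f # y)"
    then show ?thesis using G i child unfolding indexed_grammar_def by auto
  next
    fix f z r
    assume "Pop B f r \<in> prods G" "rhs_ok r z us"
    then show ?thesis using rhs_ok_NT_in_set[OF _ i child] G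
      unfolding indexed_grammar_def by (metis sym.simps(5))
  qed
qed

lemma sigma_in_nts:
  assumes "indexed_grammar G" "derivation_tree G D" "is_internal D p"
  shows "sigma D p \<in> nts G"
  using assms derivation_tree_node_in_nts[OF assms(1,2)]
  by (auto simp: is_internal_def sigma_def)

lemma in_scope_append_iff:
  "in_scope D v (v @ q) \<longleftrightarrow>
     (\<forall>k\<le>length q. is_internal D (v @ take k q) \<and> eta D v \<le> eta D (v @ take k q))"
  by (simp add: in_scope_def)

lemma in_scope_prefix:
  assumes "in_scope D v (v @ q @ r)"
  shows "in_scope D v (v @ q)"
  unfolding in_scope_append_iff
proof (intro allI impI)
  fix k
  assume "k \<le> length q"
  then have "take k (q @ r) = take k q" "k \<le> length (q @ r)" by auto
  then show "is_internal D (v @ take k q) \<and> eta D v \<le> eta D (v @ take k q)"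
    using assms unfolding in_scope_append_iff by metis
qed

lemma in_scope_shift_iff:
  assumes scope: "in_scope D v (v @ q)" and same_eta: "eta D (v @ q) = eta D v"
  shows "in_scope D (v @ q) (v @ q @ r) \<longleftrightarrow> in_scope D v (v @ q @ r)"
proof
  assume "in_scope D (v @ q) (v @ q @ r)"
  then have tail: "\<forall>k\<le>length r. is_internal D (v @ q @ take k r) \<and> eta D v \<le> eta D (v @ q @ take k r)"
    using same_eta in_scope_append_iff[of D "v @ q" r] by simp
  show "in_scope D v (v @ q @ r)"
    unfolding in_scope_append_iff
  proof (intro allI impI)
    fix k
    assume k: "k \<le> length (q @ r)"
    show "is_internal D (v @ take k (q @ r)) \<and> eta D v \<le> eta D (v @ take k (q @ r))"
    proof (cases "k \<le> length q")
      case True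
      then show ?thesis using scope unfolding in_scope_append_iff by simp
    next
      case False
      then have "take k (q @ r) = q @ take (k - length q) r" "k - length q \<le> length r"
        using k by auto
      then show ?thesis using tail by simp
    qed
  qed
next
  assume "in_scope D v (v @ q @ r)"
  then have whole: "\<forall>k\<le>length (q @ r). is_internal D (v @ take k (q @ r))
      \<and> eta D v \<le> eta D (v @ take k (q @ r))"
    unfolding in_scope_append_iff by blast
  have "is_internal D (v @ q @ take k r) \<and> eta D (v @ q) \<le> eta D (v @ q @ take k r)"
    if "k \<le> length r" for k
    using whole[rule_format, of "length q + k"] that same_eta by simp
  then show "in_scope D (v @ q) (v @ q @ r)"
    using in_scope_append_iff[of D "v @ q" r] by simp
qed

lemma beta_shift:
  assumes base: "v @ q @ r \<in> beta D v" and same_eta: "eta D (v @ q) = eta D v"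
  shows "v @ q @ r \<in> beta D (v @ q)"
proof -
  have scope: "in_scope D v (v @ q)" using base in_scope_prefix by (auto simp: beta_def)
  note shift = in_scope_shift_iff[OF scope same_eta]
  show ?thesis
    using base shift[of r] shift[of "r @ [_]"] by (simp add: beta_def)
qed

lemma descent_nth_prefix:
  assumes "descent D vs" "i \<le> j" "j < length vs"
  shows "\<exists>q. vs ! j = vs ! i @ q"
  using assms(2,3)
proof (induction j)
  case 0
  then show ?case by auto
next
  case (Suc j)
  show ?case
  proof (cases "i = Suc j")
    case True
    then show ?thesis by auto
  next
    case False
    then obtain q where "vs ! j = vs ! i @ q" using Suc by auto
    moreover obtain q' where "vs ! Suc j = vs ! j @ q'"
      using assms(1) Suc.prems unfolding descent_def by (metis diff_Suc_1 zero_less_Suc)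
    ultimately show ?thesis by auto
  qed
qed

lemma flat_descent_last_in_beta:
  assumes descent: "descent D vs" and flat: "flat D vs" and i: "i < length vs"
  shows "last vs \<in> beta D (vs ! i)"
proof -
  have last: "last vs = vs ! (length vs - 1)" and base: "last vs \<in> beta D (vs ! 0)"
    using descent by (auto simp: descent_def hd_conv_nth last_conv_nth)
  obtain q where q: "vs ! i = vs ! 0 @ q" using descent_nth_prefix[OF descent, of 0 i] i by auto
  obtain r where "last vs = vs ! i @ r"
    using descent_nth_prefix[OF descent, of i "length vs - 1"] i unfolding last by fastforce
  moreover have "eta D (vs ! i) = eta D (vs ! 0)" using flat i by (simp add: flat_def)
  ultimately show ?thesis using beta_shift[of "vs ! 0" q r D] base q by simp
qed

definition ternary_partition :: "'a set \<Rightarrow> ('a \<Rightarrow> nat) \<Rightarrow> 'a set \<times> 'a set \<times> 'a set" where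
  "ternary_partition N f = ({a\<in>N. f a = 0}, {a\<in>N. f a = 1}, {a\<in>N. f a = 2})"

lemma card_ternary_partitions_le:
  assumes "finite N"
  shows "card (ternary_partition N ` (N \<rightarrow>\<^sub>E {0, 1, 2})) \<le> 3 ^ card N"
proof -
  have "card (ternary_partition N ` (N \<rightarrow>\<^sub>E {0, 1, 2})) \<le> card (N \<rightarrow>\<^sub>E {0, 1, 2::nat})"
    using assms by (intro card_image_le finite_PiE) auto
  also have "\<dots> = 3 ^ card N" using assms by (simp add: card_PiE numeral_3_eq_3)
  finally show ?thesis .
qed

lemma tau_in_ternary_partitions:
  "tau G D M v \<in> ternary_partition (nts G) ` (nts G \<rightarrow>\<^sub>E {0, 1, 2})"
proof
  define f where "f = (\<lambda>A\<in>nts G.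
    if \<forall>v'\<in>beta D v. sigma D v' \<noteq> A then 0
    else if \<not> (\<exists>v'\<in>beta D v. marked D M v' \<and> sigma D v' = A) then 1 else 2::nat)"
  show "f \<in> nts G \<rightarrow>\<^sub>E {0, 1, 2}" unfolding f_def by auto
  show "tau G D M v = ternary_partition (nts G) f"
    unfolding tau_def ternary_partition_def f_def by auto
qed

lemma limited_flat_split_type_unique:
  assumes descent: "descent D vs" and limited: "limited G D M vs" and flat: "flat D vs"
    and ij: "i < j" "j + 1 < length vs" and split: "split_at D M vs i"
  shows "(sigma D (vs ! i), tau G D M (vs ! i)) \<noteq> (sigma D (vs ! j), tau G D M (vs ! j))"
proof
  assume same: "(sigma D (vs ! i), tau G D M (vs ! i)) = (sigma D (vs ! j), tau G D M (vs ! j))"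
  define m where "m = length vs - 1"
  have m: "j < m" "m < length vs" using ij by (auto simp: m_def)
  have "vs ! m = last vs" using ij unfolding m_def by (intro last_conv_nth[symmetric]) auto
  then have "vs ! m \<in> beta D (vs ! i)" "vs ! m \<in> beta D (vs ! j)"
    using flat_descent_last_in_beta[OF descent flat] ij by auto
  then have "\<not> split_at D M vs i"
    using limited[unfolded limited_def, rule_format, of i j m m i] same ij m by simp
  then show False using split by contradiction
qed

lemma limited_flat_split_types_inj:
  assumes "descent D vs" "limited G D M vs" "flat D vs"
  shows "inj_on (\<lambda>i. (sigma D (vs ! i), tau G D M (vs ! i)))
           {i. i + 1 < length vs \<and> split_at D M vs i}"
proof (rule inj_onI, rule ccontr)
  fix i j
  assume "i \<in> {i. i + 1 < length vs \<and> split_at D M vs i}"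
    and "j \<in> {i. i + 1 < length vs \<and> split_at D M vs i}"
    and "(sigma D (vs ! i), tau G D M (vs ! i)) = (sigma D (vs ! j), tau G D M (vs ! j))" "i \<noteq> j"
  then show False
    using limited_flat_split_type_unique[OF assms, of i j]
      limited_flat_split_type_unique[OF assms, of j i]
    by (auto simp: neq_iff)
qed

theorem lemma3:
  fixes G :: "('n,'t,'f) igrammar" and D :: "('n,'f,'t) dtree"
    and M :: "nat set" and vs :: "nat list list"
  assumes "indexed_grammar G"
    and "grounded G"
    and "derivation_tree G D"
    and "descent D vs"
    and "limited G D M vs"
    and "flat D vs"
  shows "num_splits D M vs \<le> card (nts G) * 3 ^ card (nts G)"
proof -
  let ?splits = "{i. i + 1 < length vs \<and> split_at D M vs i}"
  let ?types = "nts G \<times> ternary_partition (nts G) ` (nts G \<rightarrow>\<^sub>E {0, 1, 2})"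
  have finite_nts: "finite (nts G)" using assms(1) by (simp add: indexed_grammar_def)
  have "(\<lambda>i. (sigma D (vs ! i), tau G D M (vs ! i))) ` ?splits \<subseteq> ?types"
    using sigma_in_nts[OF assms(1,3)] tau_in_ternary_partitions assms(4)
    by (auto simp: descent_def)
  then have "num_splits D M vs \<le> card ?types"
    unfolding num_splits_def
    using limited_flat_split_types_inj[OF assms(4-6)] finite_nts
    by (intro card_inj_on_le) (auto intro: finite_PiE)
  also have "\<dots> \<le> card (nts G) * 3 ^ card (nts G)"
    using card_ternary_partitions_le[OF finite_nts] by (simp add: card_cartesian_product)
  finally show ?thesis .
qed

end
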